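(* Let $-\infty\le a<b\le+\infty$ and let $w_0$ be a positive smooth function on $(a,b)$ all of whose moments $\int_a^bx^jw_0(x)dx$ exist, with $w_0(a)=w_0(b)=0$ (as limits if endpoints are infinite). Let $m\ge1$, $a<t_1<\cdots<t_m<b$, $\vec t=(t_1,\dots,t_m)$, and let $\omega_0,\dots,\omega_m$ be real with $\sum_{k=0}^\ell\omega_k\ge0$ for $\ell=0,\dots,m$, such that $$w(x;\vec t)=w_0(x)\Big(\omega_0+\sum_{k=1}^m\omega_k\theta(x-t_k)\Big),\qquad x\in[a,b],$$ is not identically zero. Then for $k=1,\dots,m$, $$\frac{\partial}{\partial t_k}\ln h_n(\vec t)=-R_{n,k}(\vec t)\quad(n\ge0),\qquad \frac{\partial}{\partial t_k}p(n,\vec t)=r_{n,k}(\vec t)\quad(n\ge1),$$ and consequently $$\frac{\partial}{\partial t_k}\ln\beta_n(\vec t)=R_{n-1,k}(\vec t)-R_{n,k}(\vec t)\quad(n\ge1),\qquad \frac{\partial}{\partial t_k}\alpha_n(\vec t)=r_{n,k}(\vec t)-r_{n+1,k}(\vec t).$$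
   Context: $\theta(y)=1$ for $y>0$ and $0$ otherwise. $P_n(z;\vec t)=z^n+p(n,\vec t)z^{n-1}+\cdots$ is the monic degree-$n$ polynomial orthogonal w.r.t. $w(\cdot;\vec t)$ on $[a,b]$: $\int_a^bP_jP_kw\,dx=h_k(\vec t)\delta_{jk}$, $h_k>0$; $p(0,\vec t):=0$. Recurrence: $zP_n=P_{n+1}+\alpha_nP_n+\beta_nP_{n-1}$, $\beta_n=h_n/h_{n-1}$, $\alpha_n=p(n,\vec t)-p(n+1,\vec t)$. For $k=1,\dots,m$: $R_{n,k}(\vec t):=\omega_kw_0(t_k)P_n(t_k;\vec t)^2/h_n(\vec t)$ and $r_{n,k}(\vec t):=\omega_kw_0(t_k)P_n(t_k;\vec t)P_{n-1}(t_k;\vec t)/h_{n-1}(\vec t)$, with $r_{0,k}:=0$. *)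

theory Defs
  imports "HOL-Analysis.Analysis" "HOL-Computational_Algebra.Polynomial"
begin

definition theta :: "real \<Rightarrow> real" where
  "theta y = (if y > 0 then 1 else 0)"

definition ivl :: "ereal \<Rightarrow> ereal \<Rightarrow> real set" where
  "ivl a b = {x. a < ereal x \<and> ereal x < b}"

definition wt :: "(real \<Rightarrow> real) \<Rightarrow> (nat \<Rightarrow> real) \<Rightarrow> nat \<Rightarrow> (nat \<Rightarrow> real) \<Rightarrow> real \<Rightarrow> real" where
  "wt w0 \<omega> m t x = w0 x * (\<omega> 0 + (\<Sum>k=1..m. \<omega> k * theta (x - t k)))"

text \<open>Integral over [a,b] (endpoints are a null set) against the weight W.\<close>
definition ip :: "ereal \<Rightarrow> ereal \<Rightarrow> (real \<Rightarrow> real) \<Rightarrow> (real \<Rightarrow> real) \<Rightarrow> real" where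
  "ip a b W f = (LINT x:ivl a b|lborel. f x * W x)"

definition OP :: "ereal \<Rightarrow> ereal \<Rightarrow> (real \<Rightarrow> real) \<Rightarrow> nat \<Rightarrow> real poly" where
  "OP a b W n = (THE P. degree P = n \<and> lead_coeff P = 1 \<and>
      (\<forall>j<n. ip a b W (\<lambda>x. poly P x * x ^ j) = 0))"

definition hn :: "ereal \<Rightarrow> ereal \<Rightarrow> (real \<Rightarrow> real) \<Rightarrow> nat \<Rightarrow> real" where
  "hn a b W n = ip a b W (\<lambda>x. (poly (OP a b W n) x)\<^sup>2)"

definition pc :: "ereal \<Rightarrow> ereal \<Rightarrow> (real \<Rightarrow> real) \<Rightarrow> nat \<Rightarrow> real" where
  "pc a b W n = (if n = 0 then 0 else coeff (OP a b W n) (n - 1))"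

definition beta :: "ereal \<Rightarrow> ereal \<Rightarrow> (real \<Rightarrow> real) \<Rightarrow> nat \<Rightarrow> real" where
  "beta a b W n = hn a b W n / hn a b W (n - 1)"

definition alpha :: "ereal \<Rightarrow> ereal \<Rightarrow> (real \<Rightarrow> real) \<Rightarrow> nat \<Rightarrow> real" where
  "alpha a b W n = pc a b W n - pc a b W (n + 1)"

definition RR :: "ereal \<Rightarrow> ereal \<Rightarrow> (real \<Rightarrow> real) \<Rightarrow> (nat \<Rightarrow> real) \<Rightarrow> nat \<Rightarrow> (nat \<Rightarrow> real) \<Rightarrow> nat \<Rightarrow> nat \<Rightarrow> real" where
  "RR a b w0 \<omega> m t n k =
     \<omega> k * w0 (t k) * (poly (OP a b (wt w0 \<omega> m t) n) (t k))\<^sup>2 / hn a b (wt w0 \<omega> m t) n"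

definition rr :: "ereal \<Rightarrow> ereal \<Rightarrow> (real \<Rightarrow> real) \<Rightarrow> (nat \<Rightarrow> real) \<Rightarrow> nat \<Rightarrow> (nat \<Rightarrow> real) \<Rightarrow> nat \<Rightarrow> nat \<Rightarrow> real" where
  "rr a b w0 \<omega> m t n k = (if n = 0 then 0 else
     \<omega> k * w0 (t k) * poly (OP a b (wt w0 \<omega> m t) n) (t k) * poly (OP a b (wt w0 \<omega> m t) (n - 1)) (t k)
       / hn a b (wt w0 \<omega> m t) (n - 1))"

end

theory Submission
  imports Defs
begin

text \<open>Moving the jump point \<open>t\<^sub>k\<close> to \<open>s\<close> changes the weight by
  \<open>\<omega>\<^sub>k w\<^sub>0(x) (\<theta>(x - s) - \<theta>(x - t\<^sub>k))\<close>, so to first order the moment functional loses a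
  point mass \<open>c = \<omega>\<^sub>k w\<^sub>0(t\<^sub>k)\<close> at \<open>t\<^sub>k\<close>: the derivative of \<open>\<langle>p\<rangle>\<close> is \<open>-c p(t\<^sub>k)\<close>.
  The monic orthogonal polynomials arise from the moments by Gram--Schmidt, so they depend
  differentiably on \<open>s\<close>, and the derivative of \<open>P\<^sub>n\<close> has degree below \<open>n\<close>, hence is orthogonal
  to \<open>P\<^sub>n\<close>. Differentiating \<open>h\<^sub>n = \<langle>P\<^sub>n, P\<^sub>n\<rangle>\<close> therefore gives \<open>h\<^sub>n' = -c P\<^sub>n(t\<^sub>k)\<^sup>2\<close>, and
  differentiating \<open>\<langle>P\<^sub>n, P\<^sub>n\<^sub>-\<^sub>1\<rangle> = 0\<close> gives \<open>p(n)' h\<^sub>n\<^sub>-\<^sub>1 = c P\<^sub>n(t\<^sub>k) P\<^sub>n\<^sub>-\<^sub>1(t\<^sub>k)\<close>. The ordering of the jumps and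
  the sign condition on the partial sums of \<open>\<omega>\<close> keep the weight nonnegative and positive on
  an interval for \<open>s\<close> near \<open>t\<^sub>k\<close>, so the moment functional stays positive definite there.\<close>

section \<open>Orthogonal polynomials of a moment functional\<close>

definition moment_functional :: "(nat \<Rightarrow> real) \<Rightarrow> real poly \<Rightarrow> real" where
  "moment_functional \<mu> p = (\<Sum>i\<le>degree p. coeff p i * \<mu> i)"

lemma moment_functional_eq_sum:
  assumes "degree p \<le> K"
  shows "moment_functional \<mu> p = (\<Sum>i\<le>K. coeff p i * \<mu> i)"
  unfolding moment_functional_def
  by (rule sum.mono_neutral_left) (use assms in \<open>auto simp: coeff_eq_0\<close>)

lemma moment_functional_0 [simp]: "moment_functional \<mu> 0 = 0"
  by (simp add: moment_functional_def)

lemma moment_functional_add: "moment_functional \<mu> (p + q) = moment_functional \<mu> p + moment_functional \<mu> q"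
proof -
  let ?K = "max (degree p) (degree q)"
  have "degree (p + q) \<le> ?K"
    by (simp add: degree_add_le)
  then show ?thesis
    by (simp add: moment_functional_eq_sum[of _ ?K] sum.distrib algebra_simps)
qed

lemma moment_functional_smult: "moment_functional \<mu> (smult c p) = c * moment_functional \<mu> p"
  by (simp add: moment_functional_eq_sum[of _ "degree p"] sum_distrib_left algebra_simps)

lemma moment_functional_diff: "moment_functional \<mu> (p - q) = moment_functional \<mu> p - moment_functional \<mu> q"
  using moment_functional_add[of \<mu> p "- q"] moment_functional_smult[of \<mu> "- 1" q] by simp

lemma moment_functional_sum: "moment_functional \<mu> (\<Sum>j\<in>A. f j) = (\<Sum>j\<in>A. moment_functional \<mu> (f j))"
  by (induction A rule: infinite_finite_induct) (auto simp: moment_functional_add)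

fun orth_poly :: "(nat \<Rightarrow> real) \<Rightarrow> nat \<Rightarrow> real poly" where
  "orth_poly \<mu> 0 = 1"
| "orth_poly \<mu> (Suc n) = monom 1 (Suc n) -
     (\<Sum>j\<le>n. smult (moment_functional \<mu> (monom 1 (Suc n) * orth_poly \<mu> j) /
                     moment_functional \<mu> (orth_poly \<mu> j * orth_poly \<mu> j)) (orth_poly \<mu> j))"

lemma orth_poly_degree_le_and_coeff: "degree (orth_poly \<mu> n) \<le> n \<and> coeff (orth_poly \<mu> n) n = 1"
proof (induction n rule: less_induct)
  case (less n)
  show ?case
  proof (cases n)
    case (Suc n')
    have deg: "degree (orth_poly \<mu> j) \<le> n'" if "j \<le> n'" for j
      using less[of j] that Suc by auto
    have "degree (orth_poly \<mu> n) \<le> n"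
      unfolding Suc orth_poly.simps
      by (intro order.trans[OF degree_diff_le_max] max.boundedI degree_sum_le)
         (auto simp: degree_monom_eq intro!: le_SucI deg)
    moreover have "coeff (orth_poly \<mu> j) (Suc n') = 0" if "j \<le> n'" for j
      using deg[OF that] by (simp add: coeff_eq_0)
    ultimately show ?thesis
      using Suc by (simp add: coeff_sum)
  qed simp
qed

lemma coeff_orth_poly_self [simp]: "coeff (orth_poly \<mu> n) n = 1"
  using orth_poly_degree_le_and_coeff by blast

lemma degree_orth_poly [simp]: "degree (orth_poly \<mu> n) = n"
  using orth_poly_degree_le_and_coeff[of \<mu> n] le_degree[of "orth_poly \<mu> n" n] by simp

lemma orth_poly_nonzero: "orth_poly \<mu> n \<noteq> 0"
  using coeff_orth_poly_self[of \<mu> n] by (metis coeff_0 zero_neq_one)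

lemma coeff_orth_poly_above: "n < i \<Longrightarrow> coeff (orth_poly \<mu> n) i = 0"
  by (simp add: coeff_eq_0)

definition pos_def_moments :: "(nat \<Rightarrow> real) \<Rightarrow> bool" where
  "pos_def_moments \<mu> \<longleftrightarrow> (\<forall>p. p \<noteq> 0 \<longrightarrow> moment_functional \<mu> (p * p) > 0)"

lemma norm_orth_poly_pos:
  "pos_def_moments \<mu> \<Longrightarrow> moment_functional \<mu> (orth_poly \<mu> n * orth_poly \<mu> n) > 0"
  using orth_poly_nonzero unfolding pos_def_moments_def by blast

lemma orth_poly_orthogonal:
  assumes "pos_def_moments \<mu>" "j < n"
  shows "moment_functional \<mu> (orth_poly \<mu> n * orth_poly \<mu> j) = 0"
  using assms(2)
proof (induction n arbitrary: j rule: less_induct)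
  case (less n)
  then obtain n' where n: "n = Suc n'" and j: "j \<le> n'"
    by (cases n) auto
  define P where "P = orth_poly \<mu>"
  define c where "c l = moment_functional \<mu> (monom 1 (Suc n') * P l) / moment_functional \<mu> (P l * P l)" for l
  have others: "moment_functional \<mu> (P l * P j) = 0" if "l \<le> n'" "l \<noteq> j" for l
    using less.IH[of l j] less.IH[of j l] that n j
    by (cases "j < l") (auto simp: P_def mult.commute)
  have "P n * P j = monom 1 (Suc n') * P j - (\<Sum>l\<le>n'. smult (c l) (P l * P j))"
    by (simp add: n P_def c_def left_diff_distrib sum_distrib_right)
  then have "moment_functional \<mu> (P n * P j)
      = moment_functional \<mu> (monom 1 (Suc n') * P j) - (\<Sum>l\<le>n'. c l * moment_functional \<mu> (P l * P j))"
    by (simp add: moment_functional_diff moment_functional_sum moment_functional_smult)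
  also have "(\<Sum>l\<le>n'. c l * moment_functional \<mu> (P l * P j)) = c j * moment_functional \<mu> (P j * P j)"
    by (subst sum.remove[of _ j]) (use j others in auto)
  also have "c j * moment_functional \<mu> (P j * P j) = moment_functional \<mu> (monom 1 (Suc n') * P j)"
    using norm_orth_poly_pos[OF assms(1), of j] by (simp add: c_def P_def)
  finally show ?case
    by (simp add: P_def)
qed

lemma poly_in_span_orth_poly:
  "degree q \<le> n \<Longrightarrow> \<exists>d. q = (\<Sum>j\<le>n. smult (d j) (orth_poly \<mu> j))"
proof (induction n arbitrary: q)
  case 0
  then show ?case
    by (intro exI[of _ "\<lambda>_. coeff q 0"]) (simp add: degree_0_id)
next
  case (Suc n)
  define r where "r = q - smult (coeff q (Suc n)) (orth_poly \<mu> (Suc n))"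
  have "coeff r i = 0" if "n < i" for i
    using that Suc.prems
    by (cases "i = Suc n") (auto simp: r_def coeff_eq_0 simp del: orth_poly.simps)
  then have "degree r \<le> n"
    by (simp add: degree_le)
  then obtain d where "r = (\<Sum>j\<le>n. smult (d j) (orth_poly \<mu> j))"
    using Suc.IH by blast
  then have "q = (\<Sum>j\<le>Suc n. smult ((d(Suc n := coeff q (Suc n))) j) (orth_poly \<mu> j))"
    by (simp add: r_def del: orth_poly.simps)
  then show ?case
    by blast
qed

lemma orth_poly_orthogonal_lower:
  assumes "pos_def_moments \<mu>" and low: "\<And>i. n \<le> i \<Longrightarrow> coeff q i = 0"
  shows "moment_functional \<mu> (orth_poly \<mu> n * q) = 0"
proof (cases n)
  case 0
  then have "q = 0"
    using low by (simp add: poly_eqI)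
  then show ?thesis by simp
next
  case (Suc n')
  then have "degree q \<le> n'"
    using low by (simp add: degree_le)
  then obtain d where "q = (\<Sum>j\<le>n'. smult (d j) (orth_poly \<mu> j))"
    using poly_in_span_orth_poly by blast
  then show ?thesis
    using orth_poly_orthogonal[OF assms(1)] Suc
    by (simp add: sum_distrib_left moment_functional_sum moment_functional_smult del: orth_poly.simps)
qed

lemma moment_functional_mult_orth_poly_top:
  assumes "pos_def_moments \<mu>" and low: "\<And>i. Suc n \<le> i \<Longrightarrow> coeff q i = 0"
  shows "moment_functional \<mu> (q * orth_poly \<mu> n)
       = coeff q n * moment_functional \<mu> (orth_poly \<mu> n * orth_poly \<mu> n)"
proof -
  define r where "r = q - smult (coeff q n) (orth_poly \<mu> n)"
  have "coeff r i = 0" if "n \<le> i" for i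
    using that low[of i] by (cases "i = n") (auto simp: r_def coeff_orth_poly_above)
  then have "moment_functional \<mu> (orth_poly \<mu> n * r) = 0"
    by (rule orth_poly_orthogonal_lower[OF assms(1)])
  then show ?thesis
    by (simp add: r_def algebra_simps moment_functional_diff moment_functional_smult)
qed

lemma moment_functional_mult_lower:
  assumes orth: "\<forall>j<n. moment_functional \<mu> (P * monom 1 j) = 0"
    and low: "\<And>i. n \<le> i \<Longrightarrow> coeff q i = 0"
  shows "moment_functional \<mu> (P * q) = 0"
proof -
  define c where "c = coeff q"
  have "q = (\<Sum>j<n. smult (c j) (monom 1 j))"
    by (rule poly_eqI) (simp add: c_def coeff_sum low not_less smult_monom del: coeff_smult)
  then have "moment_functional \<mu> (P * q) = (\<Sum>j<n. c j * moment_functional \<mu> (P * monom 1 j))"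
    by (simp add: sum_distrib_left moment_functional_sum moment_functional_smult)
  then show ?thesis
    using orth by simp
qed

lemma the_orth_poly:
  assumes "pos_def_moments \<mu>"
  shows "(THE P. degree P = n \<and> lead_coeff P = 1 \<and> (\<forall>j<n. moment_functional \<mu> (P * monom 1 j) = 0))
       = orth_poly \<mu> n"
proof (rule the_equality)
  show "degree (orth_poly \<mu> n) = n \<and> lead_coeff (orth_poly \<mu> n) = 1 \<and>
      (\<forall>j<n. moment_functional \<mu> (orth_poly \<mu> n * monom 1 j) = 0)"
  proof (intro conjI allI impI)
    fix j assume "j < n"
    then show "moment_functional \<mu> (orth_poly \<mu> n * monom 1 j) = 0"
      by (intro orth_poly_orthogonal_lower[OF assms]) (simp add: coeff_monom)
  qed simp_all
next
  fix P assume P: "degree P = n \<and> lead_coeff P = 1 \<and> (\<forall>j<n. moment_functional \<mu> (P * monom 1 j) = 0)"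
  define R where "R = P - orth_poly \<mu> n"
  have low: "coeff R i = 0" if "n \<le> i" for i
    using P that by (cases "i = n") (auto simp: R_def coeff_eq_0)
  have "moment_functional \<mu> (P * R) = 0"
    using P by (intro moment_functional_mult_lower[OF _ low]) auto
  moreover have "moment_functional \<mu> (orth_poly \<mu> n * R) = 0"
    by (rule orth_poly_orthogonal_lower[OF assms low])
  ultimately have "moment_functional \<mu> (R * R) = 0"
    by (simp add: R_def left_diff_distrib moment_functional_diff)
  then have "R = 0"
    using assms unfolding pos_def_moments_def by fastforce
  then show "P = orth_poly \<mu> n"
    by (simp add: R_def)
qed

section \<open>Derivatives of families of polynomials\<close>

text \<open>The uniform degree bound keeps the derivative of a moment functional a finite sum.\<close>
definition has_poly_derivative :: "(real \<Rightarrow> real poly) \<Rightarrow> real poly \<Rightarrow> real \<Rightarrow> bool" where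
  "has_poly_derivative P P' t \<longleftrightarrow> (\<exists>K. \<forall>s. degree (P s) \<le> K) \<and>
     (\<forall>i. ((\<lambda>s. coeff (P s) i) has_real_derivative coeff P' i) (at t))"

lemma has_poly_derivative_coeff:
  "has_poly_derivative P P' t \<Longrightarrow> ((\<lambda>s. coeff (P s) i) has_real_derivative coeff P' i) (at t)"
  by (simp add: has_poly_derivative_def)

lemma has_poly_derivative_const: "has_poly_derivative (\<lambda>s. p) 0 t"
  unfolding has_poly_derivative_def by auto

lemma has_poly_derivative_add:
  assumes "has_poly_derivative P P' t" "has_poly_derivative Q Q' t"
  shows "has_poly_derivative (\<lambda>s. P s + Q s) (P' + Q') t"
proof -
  obtain K L where "\<And>s. degree (P s) \<le> K" "\<And>s. degree (Q s) \<le> L"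
    using assms unfolding has_poly_derivative_def by blast
  then have "degree (P s + Q s) \<le> max K L" for s
    by (meson degree_add_le le_max_iff_disj)
  then show ?thesis
    using assms unfolding has_poly_derivative_def by (auto intro: DERIV_add)
qed

lemma has_poly_derivative_diff:
  assumes "has_poly_derivative P P' t" "has_poly_derivative Q Q' t"
  shows "has_poly_derivative (\<lambda>s. P s - Q s) (P' - Q') t"
proof -
  obtain K L where "\<And>s. degree (P s) \<le> K" "\<And>s. degree (Q s) \<le> L"
    using assms unfolding has_poly_derivative_def by blast
  then have "degree (P s - Q s) \<le> max K L" for s
    by (meson degree_diff_le le_max_iff_disj)
  then show ?thesis
    using assms unfolding has_poly_derivative_def by (auto intro: DERIV_diff)
qed

lemma has_poly_derivative_smult:
  assumes f: "(f has_real_derivative f') (at t)" and P: "has_poly_derivative P P' t"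
  shows "has_poly_derivative (\<lambda>s. smult (f s) (P s)) (smult f' (P t) + smult (f t) P') t"
proof -
  obtain K where "\<And>s. degree (P s) \<le> K"
    using P unfolding has_poly_derivative_def by blast
  then have "degree (smult (f s) (P s)) \<le> K" for s
    by (meson degree_smult_le order_trans)
  moreover have "((\<lambda>s. f s * coeff (P s) i) has_real_derivative f' * coeff (P t) i + f t * coeff P' i) (at t)" for i
    using DERIV_mult[OF f has_poly_derivative_coeff[OF P]] by (simp add: mult.commute)
  ultimately show ?thesis
    unfolding has_poly_derivative_def coeff_add coeff_smult by blast
qed

lemma has_poly_derivative_mult:
  assumes P: "has_poly_derivative P P' t" and Q: "has_poly_derivative Q Q' t"
  shows "has_poly_derivative (\<lambda>s. P s * Q s) (P' * Q t + P t * Q') t"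
proof -
  obtain K L where "\<And>s. degree (P s) \<le> K" "\<And>s. degree (Q s) \<le> L"
    using assms unfolding has_poly_derivative_def by blast
  then have "degree (P s * Q s) \<le> K + L" for s
    by (meson add_mono degree_mult_le order_trans)
  moreover have "((\<lambda>s. coeff (P s * Q s) i) has_real_derivative coeff (P' * Q t + P t * Q') i) (at t)" for i
  proof -
    have "((\<lambda>s. \<Sum>j\<le>i. coeff (P s) j * coeff (Q s) (i - j)) has_real_derivative
        (\<Sum>j\<le>i. coeff (P t) j * coeff Q' (i - j) + coeff P' j * coeff (Q t) (i - j))) (at t)"
      by (intro DERIV_sum DERIV_mult' has_poly_derivative_coeff P Q)
    then show ?thesis
      by (simp add: coeff_mult sum.distrib add.commute)
  qed
  ultimately show ?thesis
    unfolding has_poly_derivative_def by blast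
qed

lemma ex_has_poly_derivative_sum:
  assumes "finite A" "\<And>j. j \<in> A \<Longrightarrow> \<exists>P'. has_poly_derivative (P j) P' t"
  shows "\<exists>P'. has_poly_derivative (\<lambda>s. \<Sum>j\<in>A. P j s) P' t"
  using assms
proof (induction A rule: finite_induct)
  case empty
  show ?case
    using has_poly_derivative_const by auto
next
  case (insert x F)
  then obtain Px PF where "has_poly_derivative (P x) Px t" "has_poly_derivative (\<lambda>s. \<Sum>j\<in>F. P j s) PF t"
    by blast
  then show ?case
    using insert.hyps by (auto intro: has_poly_derivative_add)
qed

lemma coeff_has_poly_derivative_eq_0:
  assumes "has_poly_derivative P P' t" "\<And>s. coeff (P s) i = a"
  shows "coeff P' i = 0"
proof -
  have "((\<lambda>s. a) has_real_derivative coeff P' i) (at t)"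
    using has_poly_derivative_coeff[OF assms(1), of i] assms(2) by simp
  then show ?thesis
    using DERIV_const DERIV_unique by blast
qed

lemma coeff_orth_poly_derivative_eq_0:
  assumes "has_poly_derivative (\<lambda>s. orth_poly (\<mu> s) n) P' t" "n \<le> i"
  shows "coeff P' i = 0"
proof (rule coeff_has_poly_derivative_eq_0[OF assms(1)])
  show "coeff (orth_poly (\<mu> s) n) i = (if i = n then 1 else 0)" for s
    using assms(2) by (simp add: coeff_orth_poly_above)
qed

lemma moment_functional_has_derivative:
  assumes \<mu>: "\<And>i. ((\<lambda>s. \<mu> s i) has_real_derivative \<mu>' i) (at t)"
    and P: "has_poly_derivative P P' t"
  shows "((\<lambda>s. moment_functional (\<mu> s) (P s)) has_real_derivative
           moment_functional (\<mu> t) P' + moment_functional \<mu>' (P t)) (at t)"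
proof -
  obtain K where K: "\<And>s. degree (P s) \<le> K"
    using P unfolding has_poly_derivative_def by blast
  have "coeff P' i = 0" if "K < i" for i
    by (rule coeff_has_poly_derivative_eq_0[OF P, of _ 0]) (meson K that coeff_eq_0 le_less_trans)
  then have "degree P' \<le> K"
    by (simp add: degree_le)
  then have "moment_functional (\<mu> t) P' + moment_functional \<mu>' (P t)
      = (\<Sum>i\<le>K. coeff (P t) i * \<mu>' i + coeff P' i * \<mu> t i)"
    by (simp add: moment_functional_eq_sum K sum.distrib add.commute)
  moreover have "((\<lambda>s. \<Sum>i\<le>K. coeff (P s) i * \<mu> s i) has_real_derivative
      (\<Sum>i\<le>K. coeff (P t) i * \<mu>' i + coeff P' i * \<mu> t i)) (at t)"
    by (intro DERIV_sum DERIV_mult' has_poly_derivative_coeff P \<mu>)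
  ultimately show ?thesis
    by (simp add: moment_functional_eq_sum[OF K])
qed

lemma moment_functional_point_mass: "moment_functional (\<lambda>i. c * x ^ i) p = c * poly p x"
  by (simp add: moment_functional_def poly_altdef sum_distrib_left algebra_simps)

lemma orth_poly_has_poly_derivative:
  assumes \<mu>: "\<And>i. ((\<lambda>s. \<mu> s i) has_real_derivative \<mu>' i) (at t)"
    and pos: "pos_def_moments (\<mu> t)"
  shows "\<exists>P'. has_poly_derivative (\<lambda>s. orth_poly (\<mu> s) n) P' t"
proof (induction n rule: less_induct)
  case (less n)
  show ?case
  proof (cases n)
    case 0
    then show ?thesis
      using has_poly_derivative_const by auto
  next
    case (Suc n')
    define c where "c s j = moment_functional (\<mu> s) (monom 1 n * orth_poly (\<mu> s) j) /
        moment_functional (\<mu> s) (orth_poly (\<mu> s) j * orth_poly (\<mu> s) j)" for s j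
    have "\<exists>T. has_poly_derivative (\<lambda>s. smult (c s j) (orth_poly (\<mu> s) j)) T t" if j: "j \<le> n'" for j
    proof -
      obtain P' where P': "has_poly_derivative (\<lambda>s. orth_poly (\<mu> s) j) P' t"
        using less.IH[of j] j Suc by auto
      note deriv = moment_functional_has_derivative[where \<mu> = \<mu> and \<mu>' = \<mu>', OF \<mu>]
      note num = deriv[OF has_poly_derivative_mult[OF has_poly_derivative_const[of "monom 1 n"] P']]
      note den = deriv[OF has_poly_derivative_mult[OF P' P']]
      have "moment_functional (\<mu> t) (orth_poly (\<mu> t) j * orth_poly (\<mu> t) j) \<noteq> 0"
        using norm_orth_poly_pos[OF pos] by (metis less_irrefl)
      then show ?thesis
        using has_poly_derivative_smult[OF DERIV_divide[OF num den] P'] unfolding c_def by blast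
    qed
    then obtain T where "has_poly_derivative (\<lambda>s. \<Sum>j\<le>n'. smult (c s j) (orth_poly (\<mu> s) j)) T t"
      using ex_has_poly_derivative_sum[of "{..n'}" "\<lambda>j s. smult (c s j) (orth_poly (\<mu> s) j)"] by auto
    then show ?thesis
      using has_poly_derivative_diff[OF has_poly_derivative_const[of "monom 1 n"]] by (auto simp: Suc c_def)
  qed
qed

text \<open>To first order at \<open>s = t\<close>, the measure with moments \<open>\<mu> s\<close> loses a point mass \<open>c\<close> at \<open>t\<close>.\<close>
locale moment_family =
  fixes \<mu> :: "real \<Rightarrow> nat \<Rightarrow> real" and c t :: real and S :: "real set"
  assumes moments_has_derivative: "\<And>i. ((\<lambda>s. \<mu> s i) has_real_derivative - c * t ^ i) (at t)"
    and open_S: "open S" and t_in_S: "t \<in> S"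
    and pos_def: "\<And>s. s \<in> S \<Longrightarrow> pos_def_moments (\<mu> s)"
begin

abbreviation P :: "real \<Rightarrow> nat \<Rightarrow> real poly" where
  "P s \<equiv> orth_poly (\<mu> s)"

lemma moment_functional_family_has_derivative:
  assumes "has_poly_derivative Q Q' t"
  shows "((\<lambda>s. moment_functional (\<mu> s) (Q s)) has_real_derivative
           moment_functional (\<mu> t) Q' - c * poly (Q t) t) (at t)"
  using moment_functional_has_derivative[where \<mu>' = "\<lambda>i. - c * t ^ i", OF moments_has_derivative assms]
  unfolding moment_functional_point_mass by simp

lemma orth_poly_family_has_poly_derivative:
  obtains P' where "has_poly_derivative (\<lambda>s. P s n) P' t"
  using orth_poly_has_poly_derivative[OF moments_has_derivative pos_def[OF t_in_S]] by blast

lemma norm_orth_poly_has_derivative: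
  "((\<lambda>s. moment_functional (\<mu> s) (P s n * P s n)) has_real_derivative
      - c * (poly (P t n) t)\<^sup>2) (at t)"
proof -
  obtain P' where P': "has_poly_derivative (\<lambda>s. P s n) P' t"
    by (rule orth_poly_family_has_poly_derivative)
  have "moment_functional (\<mu> t) (P t n * P') = 0"
    using coeff_orth_poly_derivative_eq_0[OF P']
    by (intro orth_poly_orthogonal_lower[OF pos_def[OF t_in_S]])
  then have "moment_functional (\<mu> t) (P' * P t n + P t n * P') = 0"
    by (simp only: moment_functional_add mult.commute add_0)
  then show ?thesis
    using moment_functional_family_has_derivative[OF has_poly_derivative_mult[OF P' P']]
    by (simp add: power2_eq_square)
qed

lemma subleading_coeff_orth_poly_has_derivative:
  "((\<lambda>s. coeff (P s (Suc n)) n) has_real_derivative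
      c * poly (P t (Suc n)) t * poly (P t n) t / moment_functional (\<mu> t) (P t n * P t n)) (at t)"
proof -
  have pos: "pos_def_moments (\<mu> t)"
    by (rule pos_def[OF t_in_S])
  obtain Q' where Q': "has_poly_derivative (\<lambda>s. P s (Suc n)) Q' t"
    by (rule orth_poly_family_has_poly_derivative)
  obtain P' where P': "has_poly_derivative (\<lambda>s. P s n) P' t"
    by (rule orth_poly_family_has_poly_derivative)
  define d where "d = coeff Q' n"
  have "((\<lambda>s. moment_functional (\<mu> s) (P s (Suc n) * P s n)) has_real_derivative 0) (at t)"
    by (rule has_field_derivative_transform_within_open[OF DERIV_const[of 0] open_S t_in_S])
       (simp add: orth_poly_orthogonal pos_def del: orth_poly.simps)
  then have "moment_functional (\<mu> t) (Q' * P t n + P t (Suc n) * P') = c * poly (P t (Suc n) * P t n) t"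
    using moment_functional_family_has_derivative[OF has_poly_derivative_mult[OF Q' P']] DERIV_unique
    by fastforce
  moreover have "moment_functional (\<mu> t) (P t (Suc n) * P') = 0"
    using coeff_orth_poly_derivative_eq_0[OF P'] by (intro orth_poly_orthogonal_lower[OF pos]) simp
  moreover have "moment_functional (\<mu> t) (Q' * P t n) = d * moment_functional (\<mu> t) (P t n * P t n)"
    unfolding d_def
    by (rule moment_functional_mult_orth_poly_top[OF pos coeff_orth_poly_derivative_eq_0[OF Q']])
  ultimately have "d * moment_functional (\<mu> t) (P t n * P t n) = c * poly (P t (Suc n)) t * poly (P t n) t"
    by (simp add: moment_functional_add)
  then have "d = c * poly (P t (Suc n)) t * poly (P t n) t / moment_functional (\<mu> t) (P t n * P t n)"
    using norm_orth_poly_pos[OF pos, of n] by (simp add: field_simps)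
  then show ?thesis
    using has_poly_derivative_coeff[OF Q', of n] by (simp add: d_def)
qed

end

section \<open>Integration against a weight\<close>

definition moments :: "ereal \<Rightarrow> ereal \<Rightarrow> (real \<Rightarrow> real) \<Rightarrow> nat \<Rightarrow> real" where
  "moments a b W i = ip a b W (\<lambda>x. x ^ i)"

lemma open_ivl: "open (ivl a b)"
  unfolding ivl_def by (intro open_Collect_conj open_Collect_less continuous_intros)

lemma ivl_sets: "ivl a b \<in> sets borel"
  unfolding ivl_def by measurable

lemma theta_eq_indicator: "theta (x - u) = indicator {u<..} x"
  by (simp add: theta_def indicator_def)

lemma set_integrable_theta_mult:
  fixes f :: "real \<Rightarrow> real"
  assumes "set_integrable lborel A f"
  shows "set_integrable lborel A (\<lambda>x. theta (x - u) * f x)"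
proof -
  have "integrable lborel (\<lambda>x. (indicator A x *\<^sub>R f x) * indicator {u<..} x)"
    using assms unfolding set_integrable_def by (intro integrable_real_mult_indicator) auto
  then show ?thesis
    unfolding set_integrable_def theta_eq_indicator by (simp add: algebra_simps)
qed

lemma poly_mult_eq_sum_monomials:
  fixes x w :: real
  shows "poly p x * w = (\<Sum>i\<le>degree p. coeff p i * (x ^ i * w))"
  by (simp only: poly_altdef sum_distrib_right mult.assoc)

lemma set_integrable_sum:
  fixes f :: "'i \<Rightarrow> 'a \<Rightarrow> 'b::{banach, second_countable_topology}"
  assumes "\<And>i. i \<in> I \<Longrightarrow> set_integrable M A (f i)"
  shows "set_integrable M A (\<lambda>x. \<Sum>i\<in>I. f i x)"
  using assms unfolding set_integrable_def scaleR_sum_right by (rule Bochner_Integration.integrable_sum)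

lemma set_integral_sum:
  fixes f :: "'i \<Rightarrow> 'a \<Rightarrow> 'b::{banach, second_countable_topology}"
  assumes "\<And>i. i \<in> I \<Longrightarrow> set_integrable M A (f i)"
  shows "(LINT x:A|M. (\<Sum>i\<in>I. f i x)) = (\<Sum>i\<in>I. LINT x:A|M. f i x)"
  using assms unfolding set_integrable_def set_lebesgue_integral_def scaleR_sum_right
  by (rule Bochner_Integration.integral_sum)

lemma set_integrable_poly_mult:
  fixes W :: "real \<Rightarrow> real"
  assumes "\<And>i. set_integrable lborel A (\<lambda>x. x ^ i * W x)"
  shows "set_integrable lborel A (\<lambda>x. poly p x * W x)"
  unfolding poly_mult_eq_sum_monomials by (intro set_integrable_sum set_integrable_mult_right assms)

lemma ip_poly:
  assumes "\<And>i. set_integrable lborel (ivl a b) (\<lambda>x. x ^ i * W x)"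
  shows "ip a b W (\<lambda>x. poly p x) = moment_functional (moments a b W) p"
  unfolding ip_def moments_def moment_functional_def poly_mult_eq_sum_monomials
  by (subst set_integral_sum) (auto intro: assms)

lemma OP_eq_orth_poly:
  assumes "\<And>i. set_integrable lborel (ivl a b) (\<lambda>x. x ^ i * W x)"
    and "pos_def_moments (moments a b W)"
  shows "OP a b W n = orth_poly (moments a b W) n"
proof -
  have "ip a b W (\<lambda>x. poly P x * x ^ j) = moment_functional (moments a b W) (P * monom 1 j)" for P j
    using ip_poly[OF assms(1), of "P * monom 1 j"] by (simp add: poly_monom)
  then show ?thesis
    unfolding OP_def using the_orth_poly[OF assms(2)] by simp
qed

lemma hn_eq_moment_functional:
  assumes "\<And>i. set_integrable lborel (ivl a b) (\<lambda>x. x ^ i * W x)"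
    and "pos_def_moments (moments a b W)"
  shows "hn a b W n = moment_functional (moments a b W) (orth_poly (moments a b W) n * orth_poly (moments a b W) n)"
  using ip_poly[OF assms(1), of "orth_poly (moments a b W) n * orth_poly (moments a b W) n"]
  unfolding hn_def OP_eq_orth_poly[OF assms] by (simp add: power2_eq_square)

lemma pos_def_moments_if_pos_on_interval:
  assumes integrable: "\<And>i. set_integrable lborel (ivl a b) (\<lambda>x. x ^ i * W x)"
    and nonneg: "\<And>x. x \<in> ivl a b \<Longrightarrow> W x \<ge> 0"
    and uv: "u < v" "{u<..<v} \<subseteq> ivl a b" and pos: "\<And>x. x \<in> {u<..<v} \<Longrightarrow> W x > 0"
  shows "pos_def_moments (moments a b W)"
  unfolding pos_def_moments_def
proof (intro allI impI)
  fix p :: "real poly" assume "p \<noteq> 0"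
  define f where "f x = indicator (ivl a b) x * (poly (p * p) x * W x)" for x
  have "moment_functional (moments a b W) (p * p) = integral\<^sup>L lborel f"
    unfolding ip_poly[OF integrable, symmetric] ip_def set_lebesgue_integral_def f_def by simp
  moreover have f_integrable: "integrable lborel f"
    using set_integrable_poly_mult[OF integrable, of "p * p"] unfolding set_integrable_def f_def by simp
  moreover have f_nonneg: "f x \<ge> 0" for x
    using nonneg by (auto simp: f_def indicator_def)
  moreover have "integral\<^sup>L lborel f \<noteq> 0"
  proof
    assume "integral\<^sup>L lborel f = 0"
    then have "AE x in lborel. f x = 0"
      using integral_nonneg_eq_0_iff_AE[OF f_integrable] f_nonneg by auto
    moreover have "AE x in lborel. x \<notin> {x. poly p x = 0}"
      using poly_roots_finite[OF \<open>p \<noteq> 0\<close>] by (intro AE_not_in finite_imp_null_set_lborel)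
    ultimately have "AE x in lborel. x \<notin> {u<..<v}"
      by eventually_elim (use uv pos in \<open>force simp: f_def\<close>)
    then have "emeasure lborel {u<..<v} = 0"
      by (subst (asm) AE_iff_measurable[of "{u<..<v}"]) auto
    then show False
      using uv by (simp add: emeasure_lborel_Ioo)
  qed
  ultimately show "moment_functional (moments a b W) (p * p) > 0"
    using integral_nonneg_AE[of f lborel] by (simp add: order_less_le)
qed

text \<open>Near \<open>u\<close> the integral differs from \<open>-\<integral>\<^sub>c\<^sup>s g\<close> by a constant.\<close>
lemma has_real_derivative_theta_integral:
  fixes g :: "real \<Rightarrow> real"
  assumes I: "open I" "I \<in> sets borel" "u \<in> I"
    and g: "continuous_on I g" "set_integrable lborel I g"
  shows "((\<lambda>s. LINT x:I|lborel. theta (x - s) * g x) has_real_derivative - g u) (at u)"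
proof -
  obtain e where e: "e > 0" "cball u e \<subseteq> I"
    using I open_contains_cball by blast
  define c where "c = u - e"
  define F where "F s = (LINT x:I|lborel. theta (x - s) * g x)" for s
  have "{c..u + e} \<subseteq> cball u e"
    by (auto simp: c_def dist_real_def)
  then have sub: "{c..u + e} \<subseteq> I"
    using e by blast
  have "((\<lambda>s. LBINT x=c..s. g x) has_vector_derivative g u) (at u within {c..u + e})"
    using e by (intro interval_integral_FTC2 continuous_on_subset[OF g(1) sub]) (auto simp: c_def)
  then have FTC: "((\<lambda>s. LBINT x=c..s. g x) has_real_derivative g u) (at u)"
    using at_within_Icc_at[of c u "u + e"] e
    by (simp add: has_real_derivative_iff_has_vector_derivative c_def)
  have F_eq: "F c - (LBINT x=c..s. g x) = F s" if s: "s \<in> {c<..<u + e}" for s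
  proof -
    have "{c<..s} \<subseteq> I"
      using sub s by auto
    then have "set_integrable lborel {c<..s} g"
      by (intro set_integrable_subset[OF g(2)]) auto
    moreover have "set_integrable lborel I (\<lambda>x. theta (x - s) * g x)"
      by (rule set_integrable_theta_mult[OF g(2)])
    moreover have "indicator I x *\<^sub>R (theta (x - c) * g x) =
        indicator {c<..s} x *\<^sub>R g x + indicator I x *\<^sub>R (theta (x - s) * g x)" for x
      using \<open>{c<..s} \<subseteq> I\<close> s by (auto simp: theta_def indicator_def subset_eq)
    ultimately have "F c = (LINT x:{c<..s}|lborel. g x) + F s"
      unfolding F_def set_lebesgue_integral_def set_integrable_def by simp
    moreover have "(LBINT x=c..s. g x) = (LINT x:{c<..s}|lborel. g x)"
      by (rule interval_integral_Ioc) (use s in auto)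
    ultimately show ?thesis
      by simp
  qed
  have "((\<lambda>s. F c - (LBINT x=c..s. g x)) has_real_derivative - g u) (at u)"
    using DERIV_diff[OF DERIV_const FTC] by simp
  then have "(F has_real_derivative - g u) (at u)"
    by (rule has_field_derivative_transform_within_open[OF _ open_greaterThanLessThan])
       (use e F_eq in \<open>auto simp: c_def\<close>)
  then show ?thesis
    unfolding F_def .
qed

locale weight_family = moment_family "\<lambda>s. moments a b (W s)" c t S
  for a b :: ereal and W :: "real \<Rightarrow> real \<Rightarrow> real" and c t :: real and S :: "real set" +
  assumes integrable_moments: "\<And>s i. set_integrable lborel (ivl a b) (\<lambda>x. x ^ i * W s x)"
begin

lemma OP_eq: "s \<in> S \<Longrightarrow> OP a b (W s) n = P s n"
  by (rule OP_eq_orth_poly[OF integrable_moments pos_def])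

lemma hn_eq: "s \<in> S \<Longrightarrow> hn a b (W s) n = moment_functional (moments a b (W s)) (P s n * P s n)"
  by (rule hn_eq_moment_functional[OF integrable_moments pos_def])

lemma hn_pos: "s \<in> S \<Longrightarrow> hn a b (W s) n > 0"
  by (simp add: hn_eq norm_orth_poly_pos pos_def)

definition R :: "nat \<Rightarrow> real" where
  "R n = c * (poly (OP a b (W t) n) t)\<^sup>2 / hn a b (W t) n"

definition r :: "nat \<Rightarrow> real" where
  "r n = (if n = 0 then 0 else c * poly (OP a b (W t) n) t * poly (OP a b (W t) (n - 1)) t / hn a b (W t) (n - 1))"

lemma ln_hn_has_derivative: "((\<lambda>s. ln (hn a b (W s) n)) has_real_derivative - R n) (at t)"
proof -
  have "((\<lambda>s. ln (moment_functional (moments a b (W s)) (P s n * P s n))) has_real_derivative - R n) (at t)"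
    using DERIV_chain2[OF DERIV_ln_divide[OF norm_orth_poly_pos[OF pos_def[OF t_in_S]]]
        norm_orth_poly_has_derivative]
    by (simp add: R_def hn_eq OP_eq t_in_S)
  then show ?thesis
    by (rule has_field_derivative_transform_within_open[OF _ open_S t_in_S]) (simp add: hn_eq)
qed

lemma pc_has_derivative: "((\<lambda>s. pc a b (W s) n) has_real_derivative r n) (at t)"
proof (cases n)
  case 0
  then show ?thesis
    by (simp add: pc_def r_def)
next
  case (Suc m)
  have "((\<lambda>s. coeff (P s (Suc m)) m) has_real_derivative r n) (at t)"
    using subleading_coeff_orth_poly_has_derivative by (simp add: Suc r_def hn_eq OP_eq t_in_S)
  then show ?thesis
    by (rule has_field_derivative_transform_within_open[OF _ open_S t_in_S]) (simp add: Suc pc_def OP_eq)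
qed

lemma ln_beta_has_derivative:
  assumes "n \<ge> 1"
  shows "((\<lambda>s. ln (beta a b (W s) n)) has_real_derivative R (n - 1) - R n) (at t)"
proof -
  have "((\<lambda>s. ln (hn a b (W s) n) - ln (hn a b (W s) (n - 1))) has_real_derivative R (n - 1) - R n) (at t)"
    using DERIV_diff[OF ln_hn_has_derivative ln_hn_has_derivative] by simp
  then show ?thesis
    by (rule has_field_derivative_transform_within_open[OF _ open_S t_in_S])
       (simp add: beta_def ln_div hn_pos[THEN less_imp_neq, THEN not_sym])
qed

lemma alpha_has_derivative: "((\<lambda>s. alpha a b (W s) n) has_real_derivative r n - r (n + 1)) (at t)"
  unfolding alpha_def by (rule DERIV_diff[OF pc_has_derivative pc_has_derivative])

end

section \<open>Step weights\<close>

definition step_factor :: "(nat \<Rightarrow> real) \<Rightarrow> nat \<Rightarrow> (nat \<Rightarrow> real) \<Rightarrow> real \<Rightarrow> real" where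
  "step_factor \<omega> m t x = \<omega> 0 + (\<Sum>k=1..m. \<omega> k * theta (x - t k))"

lemma wt_eq_step_factor: "wt w0 \<omega> m t x = w0 x * step_factor \<omega> m t x"
  by (simp add: wt_def step_factor_def)

text \<open>For increasing jump points the factor at \<open>x\<close> is a partial sum \<open>\<omega> 0 + ... + \<omega> l\<close>,
  where \<open>t l\<close> is the last jump left of \<open>x\<close>.\<close>
lemma step_factor_nonneg:
  assumes "\<forall>l\<le>m. (\<Sum>k=0..l. \<omega> k) \<ge> 0" "strict_mono_on {1..m} t"
  shows "step_factor \<omega> m t x \<ge> 0"
  using assms
proof (induction m)
  case 0
  then show ?case
    by (simp add: step_factor_def)
next
  case (Suc m)
  show ?case
  proof (cases "t (Suc m) < x")
    case True
    have "theta (x - t j) = 1" if "j \<in> {1..Suc m}" for j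
      using True strict_mono_onD[OF Suc.prems(2), of j "Suc m"] that
      by (cases "j = Suc m") (auto simp: theta_def)
    then have "step_factor \<omega> (Suc m) t x = (\<Sum>k=0..Suc m. \<omega> k)"
      by (simp add: step_factor_def sum.atLeast_Suc_atMost[of 0] del: sum.atLeast_Suc_atMost_Suc_shift)
    then show ?thesis
      using Suc.prems(1) by (metis order_refl)
  next
    case False
    then have "step_factor \<omega> (Suc m) t x = step_factor \<omega> m t x"
      by (simp add: step_factor_def theta_def)
    moreover have "strict_mono_on {1..m} t"
      using Suc.prems(2) by (rule monotone_on_subset) auto
    ultimately show ?thesis
      using Suc by simp
  qed
qed

lemma step_factor_fun_upd:
  assumes "k \<in> {1..m}"
  shows "step_factor \<omega> m (t(k := s)) x = step_factor \<omega> m t x + \<omega> k * (theta (x - s) - theta (x - t k))"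
proof -
  have "(\<Sum>j=1..m. \<omega> j * theta (x - (t(k := s)) j)) - (\<Sum>j=1..m. \<omega> j * theta (x - t j))
      = (\<Sum>j=1..m. if j = k then \<omega> k * (theta (x - s) - theta (x - t k)) else 0)"
    unfolding sum_subtractf[symmetric] by (rule sum.cong) (auto simp: algebra_simps)
  then show ?thesis
    using assms by (simp add: step_factor_def)
qed

lemma strict_mono_on_fun_upd_near:
  fixes t :: "nat \<Rightarrow> real"
  assumes mono: "strict_mono_on A t" and "finite A" "k \<in> A"
  shows "\<exists>\<delta>>0. \<forall>s. \<bar>s - t k\<bar> < \<delta> \<longrightarrow> strict_mono_on A (t(k := s))"
proof -
  define \<delta> where "\<delta> = Min (insert 1 ((\<lambda>j. \<bar>t j - t k\<bar>) ` (A - {k})))"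
  have ne: "t j \<noteq> t k" if "j \<in> A" "j \<noteq> k" for j
    using strict_mono_onD[OF mono] that \<open>k \<in> A\<close> by (metis less_irrefl linorder_neqE_nat)
  have "\<delta> > 0"
    unfolding \<delta>_def using ne \<open>finite A\<close> by (subst Min_gr_iff) auto
  moreover have gap: "\<delta> \<le> \<bar>t j - t k\<bar>" if "j \<in> A" "j \<noteq> k" for j
    unfolding \<delta>_def using that \<open>finite A\<close> by (intro Min_le) auto
  have "strict_mono_on A (t(k := s))" if s: "\<bar>s - t k\<bar> < \<delta>" for s
  proof (rule strict_mono_onI)
    fix i j assume ij: "i \<in> A" "j \<in> A" "i < j"
    then show "(t(k := s)) i < (t(k := s)) j"
      using strict_mono_onD[OF mono ij] gap[of i] gap[of j] s
      by (cases "i = k"; cases "j = k") (auto simp: abs_if split: if_splits)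
  qed
  ultimately show ?thesis
    by blast
qed

lemma theta_locally_constant:
  fixes T :: "real set"
  assumes "finite T" "e > 0"
  shows "\<exists>\<delta>>0. \<delta> \<le> e \<and> (\<forall>p\<in>T. \<forall>q x. \<bar>q - p\<bar> < \<delta> \<longrightarrow> x0 - 2 * \<delta> < x \<longrightarrow> x < x0 - \<delta> \<longrightarrow>
                                theta (x - q) = theta (x0 - p))"
proof -
  define \<delta> where "\<delta> = Min (insert e ((\<lambda>p. (x0 - p) / 3) ` {p\<in>T. p < x0}))"
  have "\<delta> > 0"
    unfolding \<delta>_def using assms by (subst Min_gr_iff) auto
  moreover have "\<delta> \<le> e"
    unfolding \<delta>_def using assms by (intro Min_le) auto
  moreover have "\<delta> \<le> (x0 - p) / 3" if "p \<in> T" "p < x0" for p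
    unfolding \<delta>_def using assms that by (intro Min_le) auto
  then have "theta (x - q) = theta (x0 - p)"
    if "p \<in> T" "\<bar>q - p\<bar> < \<delta>" "x0 - 2 * \<delta> < x" "x < x0 - \<delta>" for p q x
    using that by (cases "p < x0") (fastforce simp: theta_def abs_less_iff)+
  ultimately show ?thesis
    by blast
qed

lemma set_integrable_wt:
  fixes w0 :: "real \<Rightarrow> real"
  assumes "\<And>j. set_integrable lborel A (\<lambda>x. x ^ j * w0 x)"
  shows "set_integrable lborel A (\<lambda>x. x ^ i * wt w0 \<omega> m u x)"
proof -
  have "(\<lambda>x. x ^ i * wt w0 \<omega> m u x)
      = (\<lambda>x. \<omega> 0 * (x ^ i * w0 x) + (\<Sum>j=1..m. \<omega> j * (theta (x - u j) * (x ^ i * w0 x))))"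
    by (simp add: wt_def sum_distrib_left sum_distrib_right algebra_simps)
  then show ?thesis
    by (simp only:) (intro set_integral_add(1) set_integrable_mult_right set_integrable_sum
        set_integrable_theta_mult assms)
qed

lemma moments_wt_has_derivative:
  assumes w0: "continuous_on (ivl a b) w0" "\<And>j. set_integrable lborel (ivl a b) (\<lambda>x. x ^ j * w0 x)"
    and k: "k \<in> {1..m}" "t k \<in> ivl a b"
  shows "((\<lambda>s. moments a b (wt w0 \<omega> m (t(k := s))) i) has_real_derivative
           - (\<omega> k * w0 (t k)) * t k ^ i) (at (t k))"
proof -
  define g where "g x = x ^ i * w0 x" for x
  define F where "F s = (LINT x:ivl a b|lborel. theta (x - s) * g x)" for s
  have g: "continuous_on (ivl a b) g" "set_integrable lborel (ivl a b) g"
    using w0 unfolding g_def by (auto intro!: continuous_intros)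
  have F_deriv: "(F has_real_derivative - g (t k)) (at (t k))"
    unfolding F_def by (rule has_real_derivative_theta_integral[OF open_ivl ivl_sets k(2) g])
  have "((\<lambda>s. moments a b (wt w0 \<omega> m t) i + \<omega> k * F s - \<omega> k * F (t k)) has_real_derivative
      - (\<omega> k * w0 (t k)) * t k ^ i) (at (t k))"
    by (rule derivative_eq_intros refl F_deriv)+ (simp add: g_def)
  moreover have "moments a b (wt w0 \<omega> m (t(k := s))) i
      = moments a b (wt w0 \<omega> m t) i + \<omega> k * F s - \<omega> k * F (t k)" for s
  proof -
    have "x ^ i * wt w0 \<omega> m (t(k := s)) x
        = x ^ i * wt w0 \<omega> m t x + \<omega> k * (theta (x - s) * g x) - \<omega> k * (theta (x - t k) * g x)" for x
      by (simp add: wt_eq_step_factor step_factor_fun_upd[OF k(1)] g_def algebra_simps)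
    then show ?thesis
      unfolding moments_def ip_def F_def
      by (simp add: set_integrable_wt[OF w0(2)] set_integrable_theta_mult[OF g(2)])
  qed
  ultimately show ?thesis
    by simp
qed

lemma pos_def_moments_wt_near:
  assumes w0_pos: "\<forall>x\<in>ivl a b. w0 x > 0"
    and integrable: "\<And>j. set_integrable lborel (ivl a b) (\<lambda>x. x ^ j * w0 x)"
    and t_mono: "strict_mono_on {1..m} t" and \<omega>_sums: "\<forall>l\<le>m. (\<Sum>k=0..l. \<omega> k) \<ge> 0"
    and nonzero: "\<exists>x\<in>ivl a b. wt w0 \<omega> m t x \<noteq> 0"
    and k: "k \<in> {1..m}"
  shows "\<exists>S. open S \<and> t k \<in> S \<and> (\<forall>s\<in>S. pos_def_moments (moments a b (wt w0 \<omega> m (t(k := s)))))"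
proof -
  obtain \<delta>\<^sub>1 where "\<delta>\<^sub>1 > 0" and mono: "\<And>s. \<bar>s - t k\<bar> < \<delta>\<^sub>1 \<Longrightarrow> strict_mono_on {1..m} (t(k := s))"
    using strict_mono_on_fun_upd_near[OF t_mono _ k] by auto
  obtain x0 where x0: "x0 \<in> ivl a b" "wt w0 \<omega> m t x0 \<noteq> 0"
    using nonzero by blast
  have "step_factor \<omega> m t x0 \<ge> 0"
    by (rule step_factor_nonneg[OF \<omega>_sums t_mono])
  then have x0_pos: "step_factor \<omega> m t x0 > 0"
    using x0 by (auto simp: wt_eq_step_factor order_less_le)
  obtain e where "e > 0" "ball x0 e \<subseteq> ivl a b"
    using open_ivl x0(1) open_contains_ball by blast
  then obtain \<delta>\<^sub>2 where "\<delta>\<^sub>2 > 0" "\<delta>\<^sub>2 \<le> e / 2" and loc_const: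
    "\<And>j q x. j \<in> {1..m} \<Longrightarrow> \<bar>q - t j\<bar> < \<delta>\<^sub>2 \<Longrightarrow> x0 - 2 * \<delta>\<^sub>2 < x \<Longrightarrow> x < x0 - \<delta>\<^sub>2 \<Longrightarrow>
       theta (x - q) = theta (x0 - t j)"
    using theta_locally_constant[of "t ` {1..m}" "e / 2" x0] by auto
  then have "{x0 - 2 * \<delta>\<^sub>2<..<x0 - \<delta>\<^sub>2} \<subseteq> ball x0 e"
    by (auto simp: dist_real_def)
  then have sub: "{x0 - 2 * \<delta>\<^sub>2<..<x0 - \<delta>\<^sub>2} \<subseteq> ivl a b"
    using \<open>ball x0 e \<subseteq> ivl a b\<close> by blast
  define S where "S = ball (t k) (min \<delta>\<^sub>1 \<delta>\<^sub>2)"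
  have "pos_def_moments (moments a b (wt w0 \<omega> m (t(k := s))))" if s: "s \<in> S" for s
  proof (rule pos_def_moments_if_pos_on_interval[OF set_integrable_wt[OF integrable] _ _ sub])
    have s_near: "\<bar>s - t k\<bar> < \<delta>\<^sub>1" "\<bar>s - t k\<bar> < \<delta>\<^sub>2"
      using s by (auto simp: S_def dist_real_def)
    show "wt w0 \<omega> m (t(k := s)) x \<ge> 0" if "x \<in> ivl a b" for x
      using w0_pos that step_factor_nonneg[OF \<omega>_sums mono[OF s_near(1)]]
      by (simp add: wt_eq_step_factor less_imp_le)
    show "wt w0 \<omega> m (t(k := s)) x > 0" if x: "x \<in> {x0 - 2 * \<delta>\<^sub>2<..<x0 - \<delta>\<^sub>2}" for x
    proof -
      have "step_factor \<omega> m (t(k := s)) x = step_factor \<omega> m t x0"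
        unfolding step_factor_def using loc_const x s_near(2) \<open>\<delta>\<^sub>2 > 0\<close>
        by (intro arg_cong2[where f = "(+)"] refl sum.cong) auto
      then show ?thesis
        using w0_pos x sub x0_pos by (auto simp: wt_eq_step_factor)
    qed
  qed (use \<open>\<delta>\<^sub>2 > 0\<close> in simp)
  moreover have "open S" "t k \<in> S"
    using \<open>\<delta>\<^sub>1 > 0\<close> \<open>\<delta>\<^sub>2 > 0\<close> by (auto simp: S_def)
  ultimately show ?thesis
    by blast
qed

lemma weight_family_wt:
  assumes w0_pos: "\<forall>x\<in>ivl a b. w0 x > 0" and w0_cont: "continuous_on (ivl a b) w0"
    and integrable: "\<And>j. set_integrable lborel (ivl a b) (\<lambda>x. x ^ j * w0 x)"
    and t_in: "\<forall>k\<in>{1..m}. t k \<in> ivl a b" and t_mono: "strict_mono_on {1..m} t"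
    and \<omega>_sums: "\<forall>l\<le>m. (\<Sum>k=0..l. \<omega> k) \<ge> 0"
    and nonzero: "\<exists>x\<in>ivl a b. wt w0 \<omega> m t x \<noteq> 0"
    and k: "k \<in> {1..m}"
  shows "\<exists>S. weight_family a b (\<lambda>s. wt w0 \<omega> m (t(k := s))) (\<omega> k * w0 (t k)) (t k) S"
proof -
  obtain S where "open S" "t k \<in> S" "\<forall>s\<in>S. pos_def_moments (moments a b (wt w0 \<omega> m (t(k := s))))"
    using pos_def_moments_wt_near[OF w0_pos integrable t_mono \<omega>_sums nonzero k] by blast
  then have "weight_family a b (\<lambda>s. wt w0 \<omega> m (t(k := s))) (\<omega> k * w0 (t k)) (t k) S"
    using moments_wt_has_derivative[OF w0_cont integrable k] t_in k
    by unfold_locales (auto intro: set_integrable_wt[OF integrable])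
  then show ?thesis ..
qed

theorem lemma3p1:
  fixes a b :: ereal and w0 :: "real \<Rightarrow> real" and m :: nat
    and t :: "nat \<Rightarrow> real" and \<omega> :: "nat \<Rightarrow> real"
  assumes ab: "a < b"
    and w0_pos: "\<forall>x\<in>ivl a b. w0 x > 0"
    and w0_smooth: "\<forall>j. \<forall>x\<in>ivl a b. (deriv ^^ j) w0 differentiable (at x)"
    and moments: "\<forall>j::nat. set_integrable lborel (ivl a b) (\<lambda>x. x ^ j * w0 x)"
    and lim_a: "(a = -\<infinity> \<longrightarrow> (w0 \<longlongrightarrow> 0) at_bot) \<and>
                (a \<noteq> -\<infinity> \<longrightarrow> (w0 \<longlongrightarrow> 0) (at_right (real_of_ereal a)))"
    and lim_b: "(b = \<infinity> \<longrightarrow> (w0 \<longlongrightarrow> 0) at_top) \<and>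
                (b \<noteq> \<infinity> \<longrightarrow> (w0 \<longlongrightarrow> 0) (at_left (real_of_ereal b)))"
    and m1: "m \<ge> 1"
    and t_in: "\<forall>k\<in>{1..m}. t k \<in> ivl a b"
    and t_mono: "\<forall>k\<in>{1..m}. \<forall>l\<in>{1..m}. k < l \<longrightarrow> t k < t l"
    and \<omega>_sums: "\<forall>l\<le>m. (\<Sum>k=0..l. \<omega> k) \<ge> 0"
    and nonzero: "\<exists>x\<in>ivl a b. wt w0 \<omega> m t x \<noteq> 0"
  shows "\<forall>k\<in>{1..m}.
     (\<forall>n. ((\<lambda>s. ln (hn a b (wt w0 \<omega> m (t(k := s))) n)) has_real_derivative
              (- RR a b w0 \<omega> m t n k)) (at (t k))) \<and>
     (\<forall>n\<ge>1. ((\<lambda>s. pc a b (wt w0 \<omega> m (t(k := s))) n) has_real_derivative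
              (rr a b w0 \<omega> m t n k)) (at (t k))) \<and>
     (\<forall>n\<ge>1. ((\<lambda>s. ln (beta a b (wt w0 \<omega> m (t(k := s))) n)) has_real_derivative
              (RR a b w0 \<omega> m t (n - 1) k - RR a b w0 \<omega> m t n k)) (at (t k))) \<and>
     (\<forall>n. ((\<lambda>s. alpha a b (wt w0 \<omega> m (t(k := s))) n) has_real_derivative
              (rr a b w0 \<omega> m t n k - rr a b w0 \<omega> m t (n + 1) k)) (at (t k)))"
proof (intro ballI, goal_cases)
  case (1 k)
  have "continuous_on (ivl a b) w0"
    using spec[OF w0_smooth, of 0]
    by (intro continuous_at_imp_continuous_on ballI differentiable_imp_continuous_within) simp
  moreover have "strict_mono_on {1..m} t"
    using t_mono by (intro strict_mono_onI) auto
  ultimately obtain S where "weight_family a b (\<lambda>s. wt w0 \<omega> m (t(k := s))) (\<omega> k * w0 (t k)) (t k) S"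
    using weight_family_wt[OF w0_pos _ moments[rule_format] t_in _ \<omega>_sums nonzero 1] by blast
  then interpret weight_family a b "\<lambda>s. wt w0 \<omega> m (t(k := s))" "\<omega> k * w0 (t k)" "t k" S .
  have "RR a b w0 \<omega> m t n k = R n" "rr a b w0 \<omega> m t n k = r n" for n
    by (simp_all add: RR_def R_def rr_def r_def)
  then show ?case
    using ln_hn_has_derivative pc_has_derivative ln_beta_has_derivative alpha_has_derivative by simp
qed

end
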